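(* Let $X$ be a compact topological space, $B\subseteq\mathbb{R}^X$ an $\mathbb{R}$-subalgebra consisting of continuous functions on $X$, and $Q\subseteq B$ a quadratic module with $K_{Q,X}=X$ and $\overline{m(X)}=K_{Q,Y_B}$. Let $q\in B$ satisfy $\{x\in X\mid q(x)=0\}\subseteq\overline{\{x\in X\mid q(x)<0\}}$ (closure in $X$). Let $f=\chi_{\{q\ge0\}}$, $A=B[f]\subseteq\mathbb{R}^X$, and let $Q'$ be the quadratic module of $A$ generated by $Q$ and $qf$, $q(f-1)$. Then $K_{Q',X}=X$ and $\overline{m(X)}=K_{Q',Y_A}$.
   Context: A quadratic module of a commutative unital $\mathbb{R}$-algebra $C$ is a subset $Q\subseteq C$ with $Q+Q\subseteq Q$, $c^2Q\subseteq Q$ for all $c\in C$, and $1\in Q$. For an $\mathbb{R}$-subalgebra $C\subseteq\mathbb{R}^X$ and a quadratic module $Q$ of $C$: $K_{Q,X}:=\{x\in X\mid g(x)\ge0\ \forall g\in Q\}$; $Y_C$ is the set of unital $\mathbb{R}$-algebra homomorphisms $C\to\mathbb{R}$, with the weakest topology making all maps $y\mapsto y(c)$ continuous; $K_{Q,Y_C}:=\{y\in Y_C\mid y(g)\ge0\ \forall g\in Q\}$; $m\colon X\to Y_C$, $m(x)(c)=c(x)$; $\overline{m(X)}$ is the closure in $Y_C$. $\chi_S$ is the characteristic function of $S$, and $\{q\ge0\}=\{x\in X\mid q(x)\ge0\}$. *)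

theory Defs
  imports "HOL-Analysis.Analysis"
begin

definition subalgebra :: "('a \<Rightarrow> real) set \<Rightarrow> bool" where
  "subalgebra C \<longleftrightarrow> (\<forall>r::real. (\<lambda>_. r) \<in> C) \<and>
     (\<forall>a\<in>C. \<forall>b\<in>C. (\<lambda>x. a x + b x) \<in> C \<and> (\<lambda>x. a x * b x) \<in> C) \<and>
     (\<forall>r::real. \<forall>a\<in>C. (\<lambda>x. r * a x) \<in> C)"

text \<open>The R-subalgebra generated by a set S of functions (e.g. B[f] = generated by insert f B).\<close>
definition alg_generated :: "('a \<Rightarrow> real) set \<Rightarrow> ('a \<Rightarrow> real) set" where
  "alg_generated S = \<Inter>{C. subalgebra C \<and> S \<subseteq> C}"

definition quadratic_module :: "('a \<Rightarrow> real) set \<Rightarrow> ('a \<Rightarrow> real) set \<Rightarrow> bool" where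
  "quadratic_module C Q \<longleftrightarrow> Q \<subseteq> C \<and>
     (\<forall>g\<in>Q. \<forall>h\<in>Q. (\<lambda>x. g x + h x) \<in> Q) \<and>
     (\<forall>c\<in>C. \<forall>g\<in>Q. (\<lambda>x. (c x)\<^sup>2 * g x) \<in> Q) \<and>
     (\<lambda>_. 1) \<in> Q"

definition qm_generated :: "('a \<Rightarrow> real) set \<Rightarrow> ('a \<Rightarrow> real) set \<Rightarrow> ('a \<Rightarrow> real) set" where
  "qm_generated C G = \<Inter>{Q. quadratic_module C Q \<and> G \<subseteq> Q}"

definition K_X :: "('a \<Rightarrow> real) set \<Rightarrow> 'a set" where
  "K_X Q = {x. \<forall>g\<in>Q. g x \<ge> 0}"

text \<open>Y_C: unital R-algebra homomorphisms C -> R, represented as functions on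
  R^X that are extensional (undefined) outside C.\<close>
definition Y :: "('a \<Rightarrow> real) set \<Rightarrow> (('a \<Rightarrow> real) \<Rightarrow> real) set" where
  "Y C = {y. y \<in> extensional C \<and> y (\<lambda>_. 1) = 1 \<and>
     (\<forall>a\<in>C. \<forall>b\<in>C. y (\<lambda>x. a x + b x) = y a + y b \<and> y (\<lambda>x. a x * b x) = y a * y b) \<and>
     (\<forall>r::real. \<forall>a\<in>C. y (\<lambda>x. r * a x) = r * y a)}"

definition Ytop :: "('a \<Rightarrow> real) set \<Rightarrow> (('a \<Rightarrow> real) \<Rightarrow> real) topology" where
  "Ytop C = topology_generated_by {{y \<in> Y C. y c \<in> U} | c U. c \<in> C \<and> open U}"

definition K_Y :: "('a \<Rightarrow> real) set \<Rightarrow> ('a \<Rightarrow> real) set \<Rightarrow> (('a \<Rightarrow> real) \<Rightarrow> real) set" where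
  "K_Y C Q = {y \<in> Y C. \<forall>g\<in>Q. y g \<ge> 0}"

definition m :: "('a \<Rightarrow> real) set \<Rightarrow> 'a \<Rightarrow> (('a \<Rightarrow> real) \<Rightarrow> real)" where
  "m C x = restrict (\<lambda>c. c x) C"

end

theory Submission
  imports Defs
begin

text \<open>
  Only the inclusion of \<open>K_{Q',Y_A}\<close> in the closure of \<open>m(X)\<close> needs an argument. A character
  \<open>y\<close> of \<open>A = B[f]\<close> that is nonnegative on \<open>Q'\<close> restricts to a point of \<open>K_{Q,Y_B}\<close>, which by
  compactness of \<open>X\<close> is evaluation at some \<open>x\<^sub>0\<close>. As \<open>f\<close> is idempotent, \<open>y(f) \<in> {0,1}\<close>, and the
  generators \<open>qf\<close>, \<open>q(f-1)\<close> force either \<open>y(f) = f(x\<^sub>0)\<close>, so that \<open>y\<close> is evaluation at \<open>x\<^sub>0\<close>, or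
  \<open>q(x\<^sub>0) = 0\<close> and \<open>y(f) = 0\<close>. In the latter case every \<open>a \<in> A\<close> coincides on \<open>{q < 0}\<close> with some
  \<open>b \<in> B\<close> satisfying \<open>y(a) = b(x\<^sub>0)\<close>; since \<open>x\<^sub>0\<close> lies in the closure of \<open>{q < 0}\<close> and the \<open>b\<close> are
  continuous, evaluations at points of \<open>{q < 0}\<close> near \<open>x\<^sub>0\<close> approximate \<open>y\<close>.
\<close>

lemma subalgebra_const: "subalgebra C \<Longrightarrow> (\<lambda>_. r) \<in> C"
  unfolding subalgebra_def by blast

lemma subalgebra_add: "subalgebra C \<Longrightarrow> a \<in> C \<Longrightarrow> b \<in> C \<Longrightarrow> (\<lambda>x. a x + b x) \<in> C"
  unfolding subalgebra_def by blast

lemma subalgebra_mult: "subalgebra C \<Longrightarrow> a \<in> C \<Longrightarrow> b \<in> C \<Longrightarrow> (\<lambda>x. a x * b x) \<in> C"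
  unfolding subalgebra_def by blast

lemma subalgebra_scaleR: "subalgebra C \<Longrightarrow> a \<in> C \<Longrightarrow> (\<lambda>x. r * a x) \<in> C"
  unfolding subalgebra_def by blast

lemma subalgebra_diff:
  assumes "subalgebra C" "a \<in> C" "b \<in> C"
  shows "(\<lambda>x. a x - b x) \<in> C"
  using subalgebra_add[OF assms(1,2) subalgebra_scaleR[OF assms(1,3), of "-1"]] by simp

lemma subalgebra_alg_generated: "subalgebra (alg_generated S)"
  unfolding alg_generated_def subalgebra_def by auto

lemma alg_generated_subset: "S \<subseteq> alg_generated S"
  unfolding alg_generated_def by auto

lemma alg_generated_least: "subalgebra C \<Longrightarrow> S \<subseteq> C \<Longrightarrow> alg_generated S \<subseteq> C"
  unfolding alg_generated_def by auto

lemma qm_generated_subset: "G \<subseteq> qm_generated C G"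
  unfolding qm_generated_def by auto

lemma qm_generated_least: "quadratic_module C P \<Longrightarrow> G \<subseteq> P \<Longrightarrow> qm_generated C G \<subseteq> P"
  unfolding qm_generated_def by auto

lemma quadratic_module_nonneg:
  assumes "subalgebra C"
  shows "quadratic_module C {g \<in> C. \<forall>x. 0 \<le> g x}"
  using assms unfolding quadratic_module_def
  by (auto intro: subalgebra_add subalgebra_mult subalgebra_const simp: power2_eq_square)

lemma qm_generated_subset_nonneg:
  assumes "subalgebra C" "G \<subseteq> C" "\<forall>g\<in>G. \<forall>x. 0 \<le> g x"
  shows "qm_generated C G \<subseteq> {g \<in> C. \<forall>x. 0 \<le> g x}"
  using assms by (intro qm_generated_least quadratic_module_nonneg) auto

lemma K_X_eq_UNIV_iff: "K_X P = UNIV \<longleftrightarrow> (\<forall>g\<in>P. \<forall>x. 0 \<le> g x)"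
  unfolding K_X_def by auto

lemma Y_add: "y \<in> Y C \<Longrightarrow> a \<in> C \<Longrightarrow> b \<in> C \<Longrightarrow> y (\<lambda>x. a x + b x) = y a + y b"
  unfolding Y_def by blast

lemma Y_mult: "y \<in> Y C \<Longrightarrow> a \<in> C \<Longrightarrow> b \<in> C \<Longrightarrow> y (\<lambda>x. a x * b x) = y a * y b"
  unfolding Y_def by blast

lemma Y_scaleR: "y \<in> Y C \<Longrightarrow> a \<in> C \<Longrightarrow> y (\<lambda>x. r * a x) = r * y a"
  unfolding Y_def by blast

lemma Y_const:
  assumes "y \<in> Y C" "subalgebra C"
  shows "y (\<lambda>_. r) = r"
  using Y_scaleR[OF assms(1) subalgebra_const[OF assms(2)], of r 1] assms(1)
  by (simp add: Y_def)

lemma Y_diff: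
  assumes "y \<in> Y C" "subalgebra C" "a \<in> C" "b \<in> C"
  shows "y (\<lambda>x. a x - b x) = y a - y b"
  using Y_add[OF assms(1,3) subalgebra_scaleR[OF assms(2,4)], of "-1"]
    Y_scaleR[OF assms(1,4), of "-1"] by simp

lemma Y_idempotent:
  assumes "y \<in> Y C" "a \<in> C" "\<And>x. a x * a x = a x"
  shows "y a = 0 \<or> y a = 1"
proof -
  have "y a * y a = y a"
    using Y_mult[OF assms(1,2,2)] assms(3) by simp
  then show ?thesis by (metis mult_cancel_right1)
qed

lemma restrict_in_Y:
  assumes "y \<in> Y A" "subalgebra B" "B \<subseteq> A"
  shows "restrict y B \<in> Y B"
  using assms subalgebra_const[OF assms(2), of 1] subalgebra_add[OF assms(2)]
    subalgebra_mult[OF assms(2)] subalgebra_scaleR[OF assms(2)]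
  unfolding Y_def by (auto simp: subset_iff)

lemma Y_eqI_alg_generated:
  assumes y: "y \<in> Y (alg_generated S)" and z: "z \<in> Y (alg_generated S)"
    and eq: "\<And>s. s \<in> S \<Longrightarrow> y s = z s"
  shows "y = z"
proof -
  let ?A = "alg_generated S"
  have "subalgebra {a \<in> ?A. y a = z a}"
    using y z subalgebra_alg_generated[of S] unfolding subalgebra_def
    by (auto simp: Y_add Y_mult Y_scaleR Y_const[OF _ subalgebra_alg_generated])
  then have "?A \<subseteq> {a \<in> ?A. y a = z a}"
    using alg_generated_subset[of S] eq by (intro alg_generated_least) auto
  moreover have "y \<in> extensional ?A" "z \<in> extensional ?A"
    using y z unfolding Y_def by auto
  ultimately show ?thesis
    using extensionalityI[of y ?A z] by blast
qed

lemma m_in_Y: "subalgebra C \<Longrightarrow> m C x \<in> Y C"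
  unfolding Y_def m_def using subalgebra_const[of C 1]
  by (auto intro: subalgebra_add subalgebra_mult subalgebra_scaleR)

lemma m_eval: "c \<in> C \<Longrightarrow> m C x c = c x"
  unfolding m_def by simp

lemma topspace_Ytop: "subalgebra C \<Longrightarrow> topspace (Ytop C) = Y C"
  unfolding Ytop_def using subalgebra_const[of C 1] by (auto intro!: exI[of _ UNIV])

lemma openin_Ytop_evaluation: "c \<in> C \<Longrightarrow> open U \<Longrightarrow> openin (Ytop C) {y \<in> Y C. y c \<in> U}"
  unfolding Ytop_def openin_topology_generated_by_iff
  by (rule generate_topology_on.Basis) blast

lemma openin_Ytop_finite_nbhd:
  assumes "subalgebra C" "finite F" "F \<subseteq> C"
  shows "openin (Ytop C) {z \<in> Y C. \<forall>c\<in>F. \<bar>z c - v c\<bar> < e}"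
  using assms(2,3)
proof (induction F rule: finite_induct)
  case empty
  then show ?case using openin_topspace[of "Ytop C"] topspace_Ytop[OF assms(1)] by simp
next
  case (insert c F)
  have "{z \<in> Y C. \<forall>c\<in>insert c F. \<bar>z c - v c\<bar> < e} =
        {z \<in> Y C. z c \<in> ball (v c) e} \<inter> {z \<in> Y C. \<forall>c\<in>F. \<bar>z c - v c\<bar> < e}"
    by (auto simp: dist_real_def abs_minus_commute)
  moreover have "openin (Ytop C) {z \<in> Y C. z c \<in> ball (v c) e}"
    using insert.prems by (intro openin_Ytop_evaluation) auto
  ultimately show ?case
    using insert by (simp add: openin_Int)
qed

lemma openin_Ytop_contains_finite_nbhd:
  assumes "openin (Ytop C) T" and "y \<in> T"
  obtains F e where "finite F" "F \<subseteq> C" "e > 0" "{z \<in> Y C. \<forall>c\<in>F. \<bar>z c - y c\<bar> < e} \<subseteq> T"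
proof -
  have "generate_topology_on {{y \<in> Y C. y c \<in> U} | c U. c \<in> C \<and> open U} T"
    using assms(1) unfolding Ytop_def openin_topology_generated_by_iff .
  then have "\<exists>F e. finite F \<and> F \<subseteq> C \<and> e > 0 \<and> {z \<in> Y C. \<forall>c\<in>F. \<bar>z c - y c\<bar> < e} \<subseteq> T"
    using assms(2)
  proof (induction arbitrary: y rule: generate_topology_on.induct)
    case Empty
    then show ?case by simp
  next
    case (Int a b)
    then obtain F1 e1 F2 e2 where "finite F1" "F1 \<subseteq> C" "e1 > 0"
        "{z \<in> Y C. \<forall>c\<in>F1. \<bar>z c - y c\<bar> < e1} \<subseteq> a"
      and "finite F2" "F2 \<subseteq> C" "e2 > 0" "{z \<in> Y C. \<forall>c\<in>F2. \<bar>z c - y c\<bar> < e2} \<subseteq> b"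
      by (meson IntD1 IntD2)
    then have "{z \<in> Y C. \<forall>c\<in>F1 \<union> F2. \<bar>z c - y c\<bar> < min e1 e2} \<subseteq> a \<inter> b"
      by auto
    with \<open>finite F1\<close> \<open>finite F2\<close> \<open>F1 \<subseteq> C\<close> \<open>F2 \<subseteq> C\<close> \<open>e1 > 0\<close> \<open>e2 > 0\<close> show ?case
      by (intro exI[of _ "F1 \<union> F2"] exI[of _ "min e1 e2"]) auto
  next
    case (UN K)
    from UN.prems obtain k where k: "k \<in> K" "y \<in> k" by (rule UnionE)
    then obtain F e where "finite F" "F \<subseteq> C" "e > 0" "{z \<in> Y C. \<forall>c\<in>F. \<bar>z c - y c\<bar> < e} \<subseteq> k"
      using UN.IH[OF k] by blast
    with \<open>k \<in> K\<close> show ?case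
      by (intro exI[of _ F] exI[of _ e]) auto
  next
    case (Basis s)
    then obtain c U where s: "s = {y \<in> Y C. y c \<in> U}" "c \<in> C" "open U" by blast
    then obtain e where "e > 0" "ball (y c) e \<subseteq> U"
      using Basis.prems open_contains_ball by blast
    with s show ?case
      by (intro exI[of _ "{c}"] exI[of _ e]) (auto simp: dist_real_def abs_minus_commute)
  qed
  then show thesis using that by blast
qed

lemma in_closure_of_m_iff:
  assumes "subalgebra C"
  shows "y \<in> Ytop C closure_of (m C ` S) \<longleftrightarrow> y \<in> Y C \<and>
    (\<forall>F e. finite F \<and> F \<subseteq> C \<and> e > 0 \<longrightarrow> (\<exists>x\<in>S. \<forall>c\<in>F. \<bar>c x - y c\<bar> < e))"
    (is "_ \<longleftrightarrow> _ \<and> ?approx")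
proof -
  let ?N = "\<lambda>F e. {z \<in> Y C. \<forall>c\<in>F. \<bar>z c - y c\<bar> < e}"
  have m_in_N: "m C x \<in> ?N F e \<longleftrightarrow> (\<forall>c\<in>F. \<bar>c x - y c\<bar> < e)" if "F \<subseteq> C" for F e x
    using that m_in_Y[OF assms] by (auto simp: m_eval subset_iff)
  show ?thesis
  proof
    assume y: "y \<in> Ytop C closure_of (m C ` S)"
    then have "y \<in> Y C" and meets: "\<And>T. y \<in> T \<Longrightarrow> openin (Ytop C) T \<Longrightarrow> \<exists>w\<in>m C ` S. w \<in> T"
      unfolding in_closure_of topspace_Ytop[OF assms] by auto
    have ?approx
    proof (intro allI impI)
      fix F and e :: real
      assume F: "finite F \<and> F \<subseteq> C \<and> e > 0"
      then obtain w where "w \<in> m C ` S" "w \<in> ?N F e"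
        using meets[of "?N F e"] openin_Ytop_finite_nbhd[OF assms, of F y e] \<open>y \<in> Y C\<close> by auto
      then show "\<exists>x\<in>S. \<forall>c\<in>F. \<bar>c x - y c\<bar> < e"
        using m_in_N F by blast
    qed
    with \<open>y \<in> Y C\<close> show "y \<in> Y C \<and> ?approx" by (rule conjI)
  next
    assume y: "y \<in> Y C \<and> ?approx"
    show "y \<in> Ytop C closure_of (m C ` S)"
      unfolding in_closure_of topspace_Ytop[OF assms]
    proof (intro conjI allI impI)
      fix T assume T: "y \<in> T \<and> openin (Ytop C) T"
      obtain F e where F: "finite F" "F \<subseteq> C" "e > 0" and "?N F e \<subseteq> T"
        using openin_Ytop_contains_finite_nbhd[of C T y] T by blast
      moreover obtain x where "x \<in> S" "\<forall>c\<in>F. \<bar>c x - y c\<bar> < e"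
        using y F by blast
      ultimately show "\<exists>w. w \<in> m C ` S \<and> w \<in> T"
        using m_in_N by blast
    qed (use y in simp)
  qed
qed

lemma in_closure_of_m_obtains_point:
  fixes C :: "('a::topological_space \<Rightarrow> real) set"
  assumes "compact (UNIV :: 'a set)" "subalgebra C" "\<forall>c\<in>C. continuous_on UNIV c"
    and "y \<in> Ytop C closure_of (m C ` UNIV)"
  obtains x0 where "\<forall>c\<in>C. y c = c x0"
proof -
  have approx: "\<forall>F e. finite F \<and> F \<subseteq> C \<and> e > 0 \<longrightarrow> (\<exists>x. \<forall>c\<in>F. \<bar>c x - y c\<bar> < e)"
    using assms(4) unfolding in_closure_of_m_iff[OF assms(2)] by blast
  define K where "K = (\<lambda>(c, e). {x. \<bar>c x - y c\<bar> \<le> e})"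
  have "UNIV \<inter> \<Inter>(K ` (C \<times> {0<..})) \<noteq> {}"
  proof (rule compact_imp_fip[OF assms(1)])
    show "closed T" if "T \<in> K ` (C \<times> {0<..})" for T
      using that assms(3) unfolding K_def
      by (auto intro!: closed_Collect_le continuous_intros)
  next
    fix F' assume "finite F'" "F' \<subseteq> K ` (C \<times> {0<..})"
    then obtain P where P: "finite P" "P \<subseteq> C \<times> {0<..}" "F' = K ` P"
      by (meson finite_subset_image)
    define e where "e = Min (insert 1 (snd ` P))"
    have "e > 0" "\<forall>p\<in>P. e \<le> snd p"
      using P by (auto simp: e_def)
    moreover have "finite (fst ` P)" "fst ` P \<subseteq> C"
      using P by auto
    with approx \<open>e > 0\<close> obtain x where "\<forall>c\<in>fst ` P. \<bar>c x - y c\<bar> < e"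
      by blast
    ultimately have "x \<in> \<Inter>F'"
      unfolding P(3) K_def by force
    then show "UNIV \<inter> \<Inter>F' \<noteq> {}" by blast
  qed
  then obtain x0 where x0: "\<And>c e. c \<in> C \<Longrightarrow> e > 0 \<Longrightarrow> \<bar>c x0 - y c\<bar> \<le> e"
    unfolding K_def by auto
  have "y c = c x0" if "c \<in> C" for c
    using x0[OF that, of "\<bar>c x0 - y c\<bar> / 2"] by (cases "c x0 = y c") auto
  then show thesis using that by blast
qed

lemma closure_of_m_subset_K_Y:
  assumes "subalgebra C" "P \<subseteq> C" "K_X P = UNIV"
  shows "Ytop C closure_of (m C ` UNIV) \<subseteq> K_Y C P"
proof
  fix y assume y: "y \<in> Ytop C closure_of (m C ` UNIV)"
  have "0 \<le> y g" if "g \<in> P" for g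
  proof (rule ccontr)
    assume "\<not> 0 \<le> y g"
    moreover have "\<exists>x. \<forall>c\<in>{g}. \<bar>c x - y c\<bar> < - y g"
      if "- y g > 0"
      using y that \<open>g \<in> P\<close> assms(2) unfolding in_closure_of_m_iff[OF assms(1)] by blast
    ultimately obtain x where "\<bar>g x - y g\<bar> < - y g"
      by auto
    moreover have "0 \<le> g x"
      using assms(3) \<open>g \<in> P\<close> unfolding K_X_eq_UNIV_iff by blast
    ultimately show False
      by (simp add: abs_less_iff)
  qed
  then show "y \<in> K_Y C P"
    using y unfolding K_Y_def in_closure_of_m_iff[OF assms(1)] by blast
qed

lemma alg_generated_insert_agrees_off_support:
  assumes B: "subalgebra B" and y: "y \<in> Y (alg_generated (insert f B))"
    and f: "\<forall>x\<in>U. f x = 0" "y f = 0" and yB: "\<forall>b\<in>B. y b = b x0"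
    and a: "a \<in> alg_generated (insert f B)"
  shows "\<exists>b\<in>B. (\<forall>x\<in>U. a x = b x) \<and> y a = b x0"
proof -
  let ?A = "alg_generated (insert f B)"
  let ?S = "{a \<in> ?A. \<exists>b\<in>B. (\<forall>x\<in>U. a x = b x) \<and> y a = b x0}"
  have A: "subalgebra ?A" by (rule subalgebra_alg_generated)
  have "subalgebra ?S"
    unfolding subalgebra_def
  proof (intro conjI ballI allI)
    fix r :: real
    show "(\<lambda>_. r) \<in> ?S"
      using subalgebra_const[OF A] subalgebra_const[OF B] Y_const[OF y A] by fastforce
  next
    fix a c assume "a \<in> ?S" "c \<in> ?S"
    then obtain ba bc where a: "a \<in> ?A" "ba \<in> B" "\<forall>x\<in>U. a x = ba x" "y a = ba x0"
      and c: "c \<in> ?A" "bc \<in> B" "\<forall>x\<in>U. c x = bc x" "y c = bc x0"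
      by blast
    show "(\<lambda>x. a x + c x) \<in> ?S"
      using a c subalgebra_add[OF A] subalgebra_add[OF B] Y_add[OF y]
      by (auto intro!: bexI[of _ "\<lambda>x. ba x + bc x"])
    show "(\<lambda>x. a x * c x) \<in> ?S"
      using a c subalgebra_mult[OF A] subalgebra_mult[OF B] Y_mult[OF y]
      by (auto intro!: bexI[of _ "\<lambda>x. ba x * bc x"])
  next
    fix r :: real and a assume "a \<in> ?S"
    then obtain ba where "a \<in> ?A" "ba \<in> B" "\<forall>x\<in>U. a x = ba x" "y a = ba x0"
      by blast
    then show "(\<lambda>x. r * a x) \<in> ?S"
      using subalgebra_scaleR[OF A] subalgebra_scaleR[OF B] Y_scaleR[OF y]
      by (auto intro!: bexI[of _ "\<lambda>x. r * ba x"])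
  qed
  moreover have "insert f B \<subseteq> ?S"
    using alg_generated_subset[of "insert f B"] f yB subalgebra_const[OF B, of 0]
    by (fastforce intro: bexI[of _ "\<lambda>_. 0"])
  ultimately show ?thesis
    using alg_generated_least a by blast
qed

lemma in_closure_of_m_alg_generated_insert:
  fixes B :: "('a::topological_space \<Rightarrow> real) set"
  assumes B: "subalgebra B" "\<forall>b\<in>B. continuous_on UNIV b"
    and y: "y \<in> Y (alg_generated (insert f B))"
    and f: "\<forall>x\<in>U. f x = 0" "y f = 0" and yB: "\<forall>b\<in>B. y b = b x0"
    and x0: "x0 \<in> closure U"
  shows "y \<in> Ytop (alg_generated (insert f B)) closure_of (m (alg_generated (insert f B)) ` U)"
  unfolding in_closure_of_m_iff[OF subalgebra_alg_generated]
proof (intro conjI allI impI)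
  fix F and e :: real
  assume F: "finite F \<and> F \<subseteq> alg_generated (insert f B) \<and> e > 0"
  have "\<forall>c\<in>F. \<exists>b\<in>B. (\<forall>x\<in>U. c x = b x) \<and> y c = b x0"
    using alg_generated_insert_agrees_off_support[OF B(1) y f yB] F by blast
  then obtain b where b: "\<And>c. c \<in> F \<Longrightarrow> b c \<in> B \<and> (\<forall>x\<in>U. c x = b c x) \<and> y c = b c x0"
    by (metis bchoice)
  define V where "V = (\<Inter>c\<in>F. {x. \<bar>b c x - b c x0\<bar> < e})"
  have "open V"
    unfolding V_def using F b B(2)
    by (intro open_INT ballI open_Collect_less) (auto intro!: continuous_intros)
  moreover have "x0 \<in> V"
    unfolding V_def using F by simp
  ultimately obtain x where "x \<in> U" "x \<in> V"
    using x0 by (meson closure_iff_nhds_not_empty disjoint_iff order_refl)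
  then show "\<exists>x\<in>U. \<forall>c\<in>F. \<bar>c x - y c\<bar> < e"
    using b unfolding V_def by auto
qed (use y in simp)

lemma in_closure_of_m_adjoin_indicator:
  fixes B Q :: "('a::topological_space \<Rightarrow> real) set"
  assumes "compact (UNIV :: 'a set)" and B: "subalgebra B" "\<forall>b\<in>B. continuous_on UNIV b"
    and Q: "Q \<subseteq> B" "K_Y B Q \<subseteq> Ytop B closure_of (m B ` UNIV)"
    and q: "q \<in> B" "{x. q x = 0} \<subseteq> closure {x. q x < 0}"
    and f: "f = indicator {x. q x \<ge> 0}"
    and y: "y \<in> Y (alg_generated (insert f B))" "\<forall>g\<in>Q. 0 \<le> y g"
      "0 \<le> y (\<lambda>x. q x * f x)" "0 \<le> y (\<lambda>x. q x * (f x - 1))"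
  shows "y \<in> Ytop (alg_generated (insert f B)) closure_of (m (alg_generated (insert f B)) ` UNIV)"
proof -
  define A where "A = alg_generated (insert f B)"
  have A: "subalgebra A" "B \<subseteq> A" "f \<in> A"
    unfolding A_def using subalgebra_alg_generated alg_generated_subset by blast+
  have "restrict y B \<in> Y B"
    using restrict_in_Y[OF y(1) B(1)] A unfolding A_def by blast
  moreover have "\<forall>g\<in>Q. 0 \<le> restrict y B g"
    using y(2) Q(1) by auto
  ultimately have "restrict y B \<in> Ytop B closure_of (m B ` UNIV)"
    using Q(2) unfolding K_Y_def by blast
  then obtain x0 where "\<forall>b\<in>B. restrict y B b = b x0"
    using in_closure_of_m_obtains_point[OF assms(1) B] by blast
  then have yB: "\<forall>b\<in>B. y b = b x0"
    by simp
  have "y f = 0 \<or> y f = 1"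
    using Y_idempotent[OF y(1)] A unfolding A_def f by (simp add: indicator_def)
  moreover have "y (\<lambda>x. q x * f x) = q x0 * y f"
    using Y_mult[OF y(1)] A q(1) yB unfolding A_def by auto
  moreover have "y (\<lambda>x. q x * (f x - 1)) = q x0 * (y f - 1)"
    using Y_mult[OF y(1), of q "\<lambda>x. f x - 1"] Y_diff[OF y(1), of f "\<lambda>_. 1"]
      Y_const[OF y(1)] subalgebra_diff[of A f "\<lambda>_. 1"] subalgebra_const[of A] A q(1) yB
    unfolding A_def by auto
  ultimately consider "y f = f x0" | "q x0 = 0" "y f = 0"
    using y(3,4) unfolding f by (fastforce simp: indicator_def zero_le_mult_iff)
  then have "y \<in> Ytop A closure_of (m A ` UNIV)"
  proof cases
    case 1
    moreover have "\<forall>a\<in>A. m A x0 a = a x0"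
      by (simp add: m_eval)
    ultimately have "y = m A x0"
      using y(1) m_in_Y[OF A(1)] yB A unfolding A_def
      by (intro Y_eqI_alg_generated) auto
    moreover have "m A ` UNIV \<subseteq> topspace (Ytop A)"
      using m_in_Y[OF A(1)] topspace_Ytop[OF A(1)] by blast
    ultimately show ?thesis
      using closure_of_subset[of "m A ` UNIV" "Ytop A"] by blast
  next
    case 2
    have "\<forall>x\<in>{x. q x < 0}. f x = 0"
      unfolding f by simp
    then have "y \<in> Ytop A closure_of (m A ` {x. q x < 0})"
      using in_closure_of_m_alg_generated_insert[OF B y(1) _ 2(2) yB] 2(1) q(2)
      unfolding A_def by blast
    then show ?thesis
      by (meson closure_of_mono image_mono subset_UNIV subsetD)
  qed
  then show ?thesis
    unfolding A_def .
qed

theorem proposition3p5: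
  fixes B Q :: "('a::topological_space \<Rightarrow> real) set" and q :: "'a \<Rightarrow> real"
  assumes "compact (UNIV :: 'a set)"
    and "subalgebra B"
    and "\<forall>b\<in>B. continuous_on UNIV b"
    and "quadratic_module B Q"
    and "K_X Q = UNIV"
    and "Ytop B closure_of (m B ` UNIV) = K_Y B Q"
    and "q \<in> B"
    and "{x. q x = 0} \<subseteq> closure {x. q x < 0}"
  shows "let f = (indicator {x. q x \<ge> 0} :: 'a \<Rightarrow> real);
             A = alg_generated (insert f B);
             Q' = qm_generated A (Q \<union> {(\<lambda>x. q x * f x), (\<lambda>x. q x * (f x - 1))})
         in K_X Q' = UNIV \<and> Ytop A closure_of (m A ` UNIV) = K_Y A Q'"
proof -
  define f where "f = (indicator {x. q x \<ge> 0} :: 'a \<Rightarrow> real)"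
  define A where "A = alg_generated (insert f B)"
  define G where "G = Q \<union> {(\<lambda>x. q x * f x), (\<lambda>x. q x * (f x - 1))}"
  have A: "subalgebra A" "B \<subseteq> A" "f \<in> A"
    unfolding A_def using subalgebra_alg_generated alg_generated_subset by blast+
  have QB: "Q \<subseteq> B"
    using assms(4) unfolding quadratic_module_def by blast
  have "G \<subseteq> A"
    unfolding G_def using A QB assms(7) subalgebra_const[OF A(1)]
    by (auto intro!: subalgebra_mult subalgebra_diff)
  moreover have "\<forall>g\<in>G. \<forall>x. 0 \<le> g x"
    using assms(5) unfolding G_def f_def K_X_eq_UNIV_iff by (auto simp: indicator_def)
  ultimately have Q': "qm_generated A G \<subseteq> {g \<in> A. \<forall>x. 0 \<le> g x}"
    by (rule qm_generated_subset_nonneg[OF A(1)])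
  then have "K_X (qm_generated A G) = UNIV"
    unfolding K_X_eq_UNIV_iff by blast
  moreover have "K_Y A (qm_generated A G) \<subseteq> Ytop A closure_of (m A ` UNIV)"
    using in_closure_of_m_adjoin_indicator[OF assms(1-3) QB _ assms(7,8) f_def]
      qm_generated_subset[of G A] assms(6)
    unfolding A_def G_def K_Y_def by blast
  moreover have "Ytop A closure_of (m A ` UNIV) \<subseteq> K_Y A (qm_generated A G)"
    using closure_of_m_subset_K_Y[OF A(1)] Q' \<open>K_X (qm_generated A G) = UNIV\<close> by blast
  ultimately show ?thesis
    unfolding Let_def f_def[symmetric] A_def[symmetric] G_def[symmetric] by blast
qed

end
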